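(* Let $\mu>0$, $u_a\in\mathbb{R}$, $\alpha_\pm\ge0$, $u_->u_+$, and Riemann data $(\alpha_0,u_0)=(\alpha_-,u_-)$ for $x<0$, $(\alpha_+,u_+)$ for $x>0$. Let $u_l(t)=u_a+(u_--u_a)e^{-\mu t}$, $u_r(t)=u_a+(u_+-u_a)e^{-\mu t}$, $\sigma(t)=u_a+\big(\frac{u_-+u_+}{2}-u_a\big)e^{-\mu t}$, $\xi(t)=u_at+\frac{u_-+u_+-2u_a}{2\mu}(1-e^{-\mu t})$, and $\omega(t)=\frac{(\alpha_++\alpha_-)(u_--u_+)}{2\mu}(1-e^{-\mu t})$. Then $\alpha=\alpha^0+\omega(t)\delta(x-\xi(t))$, $u=u^0$ with $(\alpha^0,u^0)(x,t)=(\alpha_-,u_l(t))$ for $x<\xi(t)$ and $(\alpha_+,u_r(t))$ for $x>\xi(t)$ is a $\delta$-shock solution of $\partial_t\alpha+\partial_x(\alpha u)=0$, $\partial_tu+\partial_x(\tfrac12u^2)=\mu(u_a-u)$ with these data and $\omega_0=0$, i.e. a weak solution satisfying Lax's entropy condition $u_r(t)<\sigma(t)<u_l(t)$ for all $t\ge0$.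
   Context: For $\psi\in\mathcal{C}_0^\infty(\mathbb{R}\times[0,\infty))$: $\langle\alpha,\psi\rangle=\int_0^\infty\int_{\mathbb{R}}\alpha^0\psi\,dx\,dt+\int_0^\infty\omega(t)\psi(\xi(t),t)dt$, $\langle\alpha u,\psi\rangle=\int_0^\infty\int_{\mathbb{R}}\alpha^0u^0\psi\,dx\,dt+\int_0^\infty\omega(t)\xi'(t)\psi(\xi(t),t)dt$. A weak solution with data $(\alpha_0,u_0)$ and initial weight $\omega_0$ means: for all such $\psi$, $\langle\alpha,\psi_t\rangle+\langle\alpha u,\psi_x\rangle=-\int\alpha_0\psi(x,0)dx-\omega_0\psi(\xi(0),0)$ and $\int_0^\infty\int\big(u\psi_t+\tfrac{u^2}{2}\psi_x+\mu(u_a-u)\psi\big)dx\,dt=-\int u_0\psi(x,0)dx$. *)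

theory Defs
  imports "HOL-Analysis.Analysis"
begin

text \<open>Test functions psi in C_0^infinity(R x [0,infinity)), written psi x t.
  Smoothness: a family D i j (playing the role of the partial derivative
  d_x^i d_t^j psi) of continuous functions with D 0 0 = psi, such that
  D (i+1) j is the x-derivative and D i (j+1) the t-derivative of D i j.
  Support: bounded subset of R x [0,infinity), i.e. psi vanishes for |x| > R or t > R.\<close>

definition test_fun :: "(real \<Rightarrow> real \<Rightarrow> real) \<Rightarrow> bool" where
  "test_fun \<psi> \<longleftrightarrow>
     (\<exists>D :: nat \<Rightarrow> nat \<Rightarrow> real \<Rightarrow> real \<Rightarrow> real.
        D 0 0 = \<psi> \<and>
        (\<forall>i j. continuous_on UNIV (\<lambda>(x, t). D i j x t) \<and>
           (\<forall>x t. ((\<lambda>y. D i j y t) has_real_derivative D (Suc i) j x t) (at x) \<and>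
                  ((\<lambda>s. D i j x s) has_real_derivative D i (Suc j) x t) (at t)))) \<and>
     (\<exists>R. \<forall>x t. R < \<bar>x\<bar> \<or> R < t \<longrightarrow> \<psi> x t = 0)"

definition dx :: "(real \<Rightarrow> real \<Rightarrow> real) \<Rightarrow> real \<Rightarrow> real \<Rightarrow> real" where
  "dx \<psi> x t = deriv (\<lambda>y. \<psi> y t) x"

definition dt :: "(real \<Rightarrow> real \<Rightarrow> real) \<Rightarrow> real \<Rightarrow> real \<Rightarrow> real" where
  "dt \<psi> x t = deriv (\<lambda>s. \<psi> x s) t"

text \<open>Weak solution of  alpha_t + (alpha u)_x = 0,  u_t + (u^2/2)_x = mu (ua - u)
  with alpha = alpha0s + omega(t) delta(x - xi(t)), u = us, data (alpha0, u0) and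
  initial weight omega0.\<close>

definition weak_solution ::
  "real \<Rightarrow> real \<Rightarrow> (real \<Rightarrow> real \<Rightarrow> real) \<Rightarrow> (real \<Rightarrow> real \<Rightarrow> real) \<Rightarrow>
   (real \<Rightarrow> real) \<Rightarrow> (real \<Rightarrow> real) \<Rightarrow>
   (real \<Rightarrow> real) \<Rightarrow> (real \<Rightarrow> real) \<Rightarrow> real \<Rightarrow> bool" where
  "weak_solution \<mu> ua \<alpha>s us \<omega> \<xi> \<alpha>0 u0 \<omega>0 \<longleftrightarrow>
    (\<forall>\<psi>. test_fun \<psi> \<longrightarrow>
       ((LINT t:{0..}|lborel. LINT x|lborel. \<alpha>s x t * dt \<psi> x t)
          + (LINT t:{0..}|lborel. \<omega> t * dt \<psi> (\<xi> t) t))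
       + ((LINT t:{0..}|lborel. LINT x|lborel. \<alpha>s x t * us x t * dx \<psi> x t)
          + (LINT t:{0..}|lborel. \<omega> t * deriv \<xi> t * dx \<psi> (\<xi> t) t))
       = - (LINT x|lborel. \<alpha>0 x * \<psi> x 0) - \<omega>0 * \<psi> (\<xi> 0) 0
     \<and>
       (LINT t:{0..}|lborel. LINT x|lborel.
          us x t * dt \<psi> x t + (us x t)\<^sup>2 / 2 * dx \<psi> x t + \<mu> * (ua - us x t) * \<psi> x t)
       = - (LINT x|lborel. u0 x * \<psi> x 0))"

end

theory Submission
  imports Defs
begin

text \<open>At each time split the x-integrals at the shock \<open>\<xi>(t)\<close> into
  integrals \<open>L, R\<close> over windows moving with the shock. By the Leibniz rule their time derivatives
  pick up the boundary terms \<open>\<plusminus>\<sigma> \<psi>(\<xi>(t), t)\<close>, and \<open>\<partial>\<^sub>x\<psi>\<close> integrates over them to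
  \<open>\<plusminus>\<psi>(\<xi>(t), t)\<close>. Hence, for a density with constant values \<open>p\<^sub>l, p\<^sub>r\<close> and fluxes
  \<open>q\<^sub>l, q\<^sub>r\<close> on the two sides, each weak identity is the fundamental theorem of calculus for
  \<open>p\<^sub>l L + p\<^sub>r R + \<omega> \<psi>(\<xi>(t), t)\<close>, which vanishes for large t, provided the side values solve
  their source ODEs and the weight satisfies \<open>\<omega>' = [q] - \<sigma> [p]\<close>. For \<open>\<alpha>\<close> this reads
  \<open>\<omega>' = am (ul - \<sigma>) + ap (\<sigma> - ur)\<close>; for \<open>u\<close>, where \<open>\<omega> = 0\<close>, it reads
  \<open>\<sigma> = (ul + ur) / 2\<close>, which also yields Lax's condition \<open>ur < \<sigma> < ul\<close>.\<close>

lemma has_derivative_of_partials: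
  fixes F Fx Ft :: "real \<Rightarrow> real \<Rightarrow> real"
  assumes dx: "\<And>x t. ((\<lambda>y. F y t) has_real_derivative Fx x t) (at x)"
      and dt: "\<And>x t. ((\<lambda>s. F x s) has_real_derivative Ft x t) (at t)"
      and cont_dt: "continuous_on UNIV (\<lambda>(x, t). Ft x t)"
  shows "((\<lambda>(x, t). F x t) has_derivative (\<lambda>(h, k). Fx x t * h + Ft x t * k)) (at (x, t))"
proof -
  have "isCont (\<lambda>(x, t). blinfun_mult_right (Ft x t)) (x, t)"
    using cont_dt unfolding split_beta
    by (auto simp: continuous_on_eq_continuous_at intro!: continuous_intros)
  then have "((\<lambda>(x, t). F x t) has_derivative (\<lambda>(h, k). Fx x t * h + blinfun_mult_right (Ft x t) k))
      (at (x, t) within UNIV \<times> UNIV)"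
    using dx dt by (intro has_derivative_partialsI) (auto simp: has_field_derivative_def split_beta)
  then show ?thesis by simp
qed

lemma continuous_on_compose_pair:
  assumes "continuous_on UNIV (\<lambda>(x, t). G x t)" "continuous_on S f" "continuous_on S g"
  shows "continuous_on S (\<lambda>s. G (f s) (g s))"
  using continuous_on_compose2[OF assms(1) continuous_on_Pair[OF assms(2,3)]] by simp

lemma DERIV_along_curve:
  fixes F Fx Ft :: "real \<Rightarrow> real \<Rightarrow> real"
  assumes dx: "\<And>x t. ((\<lambda>y. F y t) has_real_derivative Fx x t) (at x)"
      and dt: "\<And>x t. ((\<lambda>s. F x s) has_real_derivative Ft x t) (at t)"
      and cont_dt: "continuous_on UNIV (\<lambda>(x, t). Ft x t)"
      and curve: "(\<xi> has_real_derivative \<xi>') (at t)"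
  shows "((\<lambda>s. F (\<xi> s + y) s) has_real_derivative Fx (\<xi> t + y) t * \<xi>' + Ft (\<xi> t + y) t) (at t)"
proof -
  have "((\<lambda>s. (\<xi> s + y, s)) has_derivative (\<lambda>h. (\<xi>' * h, h))) (at t)"
    using curve by (auto simp: has_field_derivative_def intro!: derivative_eq_intros)
  from diff_chain_at[OF this has_derivative_of_partials[OF dx dt cont_dt]]
  have "((\<lambda>s. F (\<xi> s + y) s) has_derivative (\<lambda>h. Fx (\<xi> t + y) t * (\<xi>' * h) + Ft (\<xi> t + y) t * h)) (at t)"
    by (simp add: o_def)
  then show ?thesis
    unfolding has_field_derivative_def by (rule has_derivative_eq_rhs) (simp add: fun_eq_iff algebra_simps)
qed

lemma continuous_on_integral_along_curve:
  fixes G :: "real \<Rightarrow> real \<Rightarrow> real" and \<xi> :: "real \<Rightarrow> real"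
  assumes "continuous_on UNIV (\<lambda>(x, t). G x t)" "continuous_on UNIV \<xi>"
  shows "continuous_on S (\<lambda>t. integral {a..b} (\<lambda>y. G (\<xi> t + y) t))"
proof -
  have "continuous_on (S \<times> cbox a b) (\<lambda>(t, y). G (\<xi> t + y) t)"
    unfolding split_beta
    by (intro continuous_on_compose_pair[OF assms(1)] continuous_intros
        continuous_on_compose2[OF assms(2)]) auto
  from integral_continuous_on_param[where f="\<lambda>t y. G (\<xi> t + y) t", OF this] show ?thesis
    by simp
qed

lemma DERIV_integral_along_curve:
  fixes F Fx Ft :: "real \<Rightarrow> real \<Rightarrow> real"
  assumes dx: "\<And>x t. ((\<lambda>y. F y t) has_real_derivative Fx x t) (at x)"
      and dt: "\<And>x t. ((\<lambda>s. F x s) has_real_derivative Ft x t) (at t)"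
      and cont: "continuous_on UNIV (\<lambda>(x, t). F x t)"
      and cont_dx: "continuous_on UNIV (\<lambda>(x, t). Fx x t)"
      and cont_dt: "continuous_on UNIV (\<lambda>(x, t). Ft x t)"
      and curve: "\<And>t. (\<xi> has_real_derivative \<sigma> t) (at t)"
      and cont_speed: "continuous_on UNIV \<sigma>"
  shows "((\<lambda>s. integral {a..b} (\<lambda>y. F (\<xi> s + y) s)) has_real_derivative
           \<sigma> t * integral {a..b} (\<lambda>y. Fx (\<xi> t + y) t) + integral {a..b} (\<lambda>y. Ft (\<xi> t + y) t)) (at t)"
proof -
  have cont_curve: "continuous_on UNIV \<xi>"
    using curve by (meson DERIV_isCont continuous_at_imp_continuous_on)
  have cont_along: "continuous_on S (\<lambda>p. H (\<xi> (fst p) + snd p) (fst p))"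
    if "continuous_on UNIV (\<lambda>(x, t). H x t)" for H :: "real \<Rightarrow> real \<Rightarrow> real" and S
    by (intro continuous_on_compose_pair[OF that] continuous_intros
        continuous_on_compose2[OF cont_curve]) auto
  have integrable: "(\<lambda>y. H (c + y) t) integrable_on {a..b}"
    if "continuous_on UNIV (\<lambda>(x, t). H x t)" for H :: "real \<Rightarrow> real \<Rightarrow> real" and c t
    by (intro integrable_continuous_interval continuous_on_compose_pair[OF that] continuous_intros)
  have "((\<lambda>s. integral (cbox a b) (\<lambda>y. F (\<xi> s + y) s)) has_real_derivative
          integral (cbox a b) (\<lambda>y. Fx (\<xi> t + y) t * \<sigma> t + Ft (\<xi> t + y) t)) (at t within UNIV)"
  proof (rule leibniz_rule_field_derivative)
    show "((\<lambda>s. F (\<xi> s + y) s) has_real_derivative Fx (\<xi> s + y) s * \<sigma> s + Ft (\<xi> s + y) s)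
        (at s within UNIV)" for s y
      using DERIV_along_curve[OF dx dt cont_dt curve] by simp
    show "(\<lambda>y. F (\<xi> s + y) s) integrable_on cbox a b" for s
      using integrable[OF cont] by simp
    show "continuous_on (UNIV \<times> cbox a b) (\<lambda>(s, y). Fx (\<xi> s + y) s * \<sigma> s + Ft (\<xi> s + y) s)"
      unfolding split_beta
      by (intro continuous_intros cont_along cont_dx cont_dt continuous_on_compose2[OF cont_speed]) auto
  qed auto
  also have "integral (cbox a b) (\<lambda>y. Fx (\<xi> t + y) t * \<sigma> t + Ft (\<xi> t + y) t)
      = \<sigma> t * integral {a..b} (\<lambda>y. Fx (\<xi> t + y) t) + integral {a..b} (\<lambda>y. Ft (\<xi> t + y) t)"
    using integrable[OF cont_dx] integrable[OF cont_dt]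
    by (simp add: integral_add integrable_on_mult_right mult.commute)
  finally show ?thesis by simp
qed

lemma lborel_integral_split_at:
  fixes f g :: "real \<Rightarrow> real"
  assumes cont: "continuous_on UNIV f" "continuous_on UNIV g"
    and support: "\<And>x. R < \<bar>x\<bar> \<Longrightarrow> f x = 0" "\<And>x. R < \<bar>x\<bar> \<Longrightarrow> g x = 0"
    and width: "R + \<bar>c\<bar> < B"
  shows "(LINT x|lborel. (if x < c then f x else g x))
       = integral {-B..0} (\<lambda>y. f (c + y)) + integral {0..B} (\<lambda>y. g (c + y))"
proof -
  have cont_shifted: "continuous_on S (\<lambda>y. h (c + y))" if "continuous_on UNIV h" for h :: "real \<Rightarrow> real" and S
    by (rule continuous_on_compose2[OF that]) (auto intro!: continuous_intros)
  have left: "set_integrable lborel {-B..<0} (\<lambda>y. f (c + y))"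
    by (rule set_integrable_subset[OF borel_integrable_atLeastAtMost'[OF cont_shifted[OF cont(1)], of "-B" 0]]) auto
  have right: "set_integrable lborel {0..B} (\<lambda>y. g (c + y))"
    by (rule borel_integrable_atLeastAtMost'[OF cont_shifted[OF cont(2)]])
  have split: "(if c + y < c then f (c + y) else g (c + y))
      = indicator {-B..<0} y *\<^sub>R f (c + y) + indicator {0..B} y *\<^sub>R g (c + y)" for y
  proof -
    have "R < \<bar>c + y\<bar>" if "y < -B \<or> B < y" using that width by linarith
    then show ?thesis using support by (auto simp: indicator_def)
  qed
  have "(LINT x|lborel. (if x < c then f x else g x))
      = (LINT y|lborel. (if c + y < c then f (c + y) else g (c + y)))"
    by (subst lborel_integral_real_affine[of 1 _ c]) (simp_all only: mult_1 abs_one scaleR_one)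
  also have "\<dots> = (LINT y:{-B..<0}|lborel. f (c + y)) + (LINT y:{0..B}|lborel. g (c + y))"
    unfolding split using left right unfolding set_integrable_def set_lebesgue_integral_def
    by (rule Bochner_Integration.integral_add)
  also have "\<dots> = integral {-B..<0} (\<lambda>y. f (c + y)) + integral {0..B} (\<lambda>y. g (c + y))"
    using set_borel_integral_eq_integral(2)[OF left] set_borel_integral_eq_integral(2)[OF right] by simp
  also have "integral {-B..<0} (\<lambda>y. f (c + y)) = integral {-B..0} (\<lambda>y. f (c + y))"
    by (rule integral_spike_set) (auto intro: negligible_subset[of "{0}"])
  finally show ?thesis .
qed

lemma set_integral_atLeast_eq_integral:
  fixes h H :: "real \<Rightarrow> real"
  assumes cont: "continuous_on {a..b} H"
    and eq: "\<And>t. t \<in> {a..b} \<Longrightarrow> h t = H t"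
    and support: "\<And>t. b < t \<Longrightarrow> h t = 0"
  shows "(LINT t:{a..}|lborel. h t) = integral {a..b} H"
proof -
  have "indicator {a..} t *\<^sub>R h t = indicator {a..b} t *\<^sub>R H t" for t
    using eq[of t] support[of t] by (cases "t \<le> b") (auto simp: indicator_def)
  then have "(LINT t:{a..}|lborel. h t) = (LINT t:{a..b}|lborel. H t)"
    unfolding set_lebesgue_integral_def by presburger
  also have "\<dots> = integral {a..b} H"
    by (rule set_borel_integral_eq_integral(2)[OF borel_integrable_atLeastAtMost'[OF cont]])
  finally show ?thesis .
qed

locale C1_test_function =
  fixes \<psi> \<psi>x \<psi>t :: "real \<Rightarrow> real \<Rightarrow> real" and R :: real
  assumes has_dx: "\<And>x t. ((\<lambda>y. \<psi> y t) has_real_derivative \<psi>x x t) (at x)"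
    and has_dt: "\<And>x t. ((\<lambda>s. \<psi> x s) has_real_derivative \<psi>t x t) (at t)"
    and continuous_dx: "continuous_on UNIV (\<lambda>(x, t). \<psi>x x t)"
    and continuous_dt: "continuous_on UNIV (\<lambda>(x, t). \<psi>t x t)"
    and support: "\<And>x t. R < \<bar>x\<bar> \<or> R < t \<Longrightarrow> \<psi> x t = 0"
begin

lemma continuous: "continuous_on UNIV (\<lambda>(x, t). \<psi> x t)"
proof (rule has_derivative_continuous_on)
  show "((\<lambda>(x, t). \<psi> x t) has_derivative (\<lambda>(h, k). \<psi>x (fst p) (snd p) * h + \<psi>t (fst p) (snd p) * k))
      (at p within UNIV)" for p
    using has_derivative_of_partials[OF has_dx has_dt continuous_dt, of "fst p" "snd p"] by simp
qed

lemma support_dx: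
  assumes "R < \<bar>x\<bar> \<or> R < t" shows "\<psi>x x t = 0"
proof (rule DERIV_local_const[OF has_dx])
  show "0 < (if R < t then 1 else \<bar>x\<bar> - R)" using assms by auto
  show "\<forall>y. \<bar>x - y\<bar> < (if R < t then 1 else \<bar>x\<bar> - R) \<longrightarrow> \<psi> x t = \<psi> y t"
    using assms by (auto split: if_splits intro!: support[THEN trans, symmetric])
qed

lemma support_dt:
  assumes "R < \<bar>x\<bar> \<or> R < t" shows "\<psi>t x t = 0"
proof (rule DERIV_local_const[OF has_dt])
  show "0 < (if R < \<bar>x\<bar> then 1 else t - R)" using assms by auto
  show "\<forall>s. \<bar>t - s\<bar> < (if R < \<bar>x\<bar> then 1 else t - R) \<longrightarrow> \<psi> x t = \<psi> x s"
    using assms by (auto split: if_splits intro!: support[THEN trans, symmetric])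
qed

end

lemma test_fun_imp_C1_test_function:
  assumes "test_fun \<psi>"
  obtains R where "C1_test_function \<psi> (dx \<psi>) (dt \<psi>) R"
proof -
  obtain D R where D00: "D 0 0 = \<psi>"
    and cont: "\<And>i j. continuous_on UNIV (\<lambda>(x, t). D i j x t)"
    and has_dx: "\<And>i j x t. ((\<lambda>y. D i j y t) has_real_derivative D (Suc i) j x t) (at x)"
    and has_dt: "\<And>i j x t. ((\<lambda>s. D i j x s) has_real_derivative D i (Suc j) x t) (at t)"
    and support: "\<And>x t. R < \<bar>x\<bar> \<or> R < t \<Longrightarrow> \<psi> x t = 0"
    using assms unfolding test_fun_def by metis
  have "dx \<psi> = D 1 0" "dt \<psi> = D 0 1"
    using has_dx[of 0 0] has_dt[of 0 0] by (auto simp: fun_eq_iff dx_def dt_def D00 DERIV_imp_deriv)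
  then have "C1_test_function \<psi> (dx \<psi>) (dt \<psi>) R"
    using has_dx[of 0 0] has_dt[of 0 0] cont support by unfold_locales (simp_all add: D00)
  then show thesis by (rule that)
qed

locale C1_test_function_on_curve = C1_test_function +
  fixes \<xi> \<sigma> :: "real \<Rightarrow> real"
  assumes curve: "\<And>t. (\<xi> has_real_derivative \<sigma> t) (at t)"
    and continuous_speed: "continuous_on UNIV \<sigma>"
begin

definition horizon :: real where "horizon = \<bar>R\<bar> + 1"

text \<open>The half-width of an x-window around the curve that contains the support of \<open>\<psi>\<close>
  for all times up to the horizon.\<close>

definition halfwidth :: real where
  "halfwidth = \<bar>R\<bar> + 1 + (SUP t\<in>{0..horizon}. \<bar>\<xi> t\<bar>)"

definition left_integral :: "(real \<Rightarrow> real \<Rightarrow> real) \<Rightarrow> real \<Rightarrow> real" where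
  "left_integral F t = integral {-halfwidth..0} (\<lambda>y. F (\<xi> t + y) t)"

definition right_integral :: "(real \<Rightarrow> real \<Rightarrow> real) \<Rightarrow> real \<Rightarrow> real" where
  "right_integral F t = integral {0..halfwidth} (\<lambda>y. F (\<xi> t + y) t)"

lemma continuous_curve: "continuous_on UNIV \<xi>"
  using curve by (meson DERIV_isCont continuous_at_imp_continuous_on)

lemma R_less_horizon: "R < horizon"
  unfolding horizon_def by simp

lemma halfwidth_bound:
  assumes "t \<in> {0..horizon}" shows "\<bar>R\<bar> + \<bar>\<xi> t\<bar> < halfwidth"
proof -
  have "compact ((\<lambda>t. \<bar>\<xi> t\<bar>) ` {0..horizon})"
    by (intro compact_continuous_image continuous_intros continuous_on_subset[OF continuous_curve]) auto
  then have "\<bar>\<xi> t\<bar> \<le> (SUP t\<in>{0..horizon}. \<bar>\<xi> t\<bar>)"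
    using assms by (intro cSUP_upper bounded_imp_bdd_above compact_imp_bounded)
  then show ?thesis unfolding halfwidth_def by linarith
qed

lemma continuous_on_side_integrals:
  assumes "continuous_on UNIV (\<lambda>(x, t). F x t)"
  shows "continuous_on S (left_integral F)" "continuous_on S (right_integral F)"
  unfolding left_integral_def right_integral_def
  by (intro continuous_on_integral_along_curve[OF assms continuous_curve])+

lemma DERIV_side_integrals:
  "(left_integral \<psi> has_real_derivative \<sigma> t * left_integral \<psi>x t + left_integral \<psi>t t) (at t)"
  "(right_integral \<psi> has_real_derivative \<sigma> t * right_integral \<psi>x t + right_integral \<psi>t t) (at t)"
  unfolding left_integral_def right_integral_def
  by (intro DERIV_integral_along_curve[OF has_dx has_dt continuous continuous_dx continuous_dt
        curve continuous_speed])+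

lemma DERIV_on_curve: "((\<lambda>s. \<psi> (\<xi> s) s) has_real_derivative \<sigma> t * \<psi>x (\<xi> t) t + \<psi>t (\<xi> t) t) (at t)"
  using DERIV_along_curve[OF has_dx has_dt continuous_dt curve, where y=0] by (simp add: mult.commute)

lemma integral_dx:
  assumes "a \<le> b"
  shows "integral {a..b} (\<lambda>y. \<psi>x (c + y) t) = \<psi> (c + b) t - \<psi> (c + a) t"
proof (rule integral_unique[OF fundamental_theorem_of_calculus[OF assms]])
  fix y
  have "((\<lambda>y. \<psi> (c + y) t) has_real_derivative \<psi>x (c + y) t * 1) (at y)"
    by (rule DERIV_chain2[OF has_dx]) (auto intro!: derivative_eq_intros)
  then show "((\<lambda>y. \<psi> (c + y) t) has_vector_derivative \<psi>x (c + y) t) (at y within {a..b})"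
    by (simp add: has_real_derivative_iff_has_vector_derivative has_vector_derivative_at_within)
qed

lemma side_integrals_dx:
  assumes "t \<in> {0..horizon}"
  shows "left_integral \<psi>x t = \<psi> (\<xi> t) t" "right_integral \<psi>x t = - \<psi> (\<xi> t) t"
proof -
  have "0 \<le> halfwidth" and "R < \<bar>\<xi> t - halfwidth\<bar>" "R < \<bar>\<xi> t + halfwidth\<bar>"
    using halfwidth_bound[OF assms] by auto
  then show "left_integral \<psi>x t = \<psi> (\<xi> t) t" "right_integral \<psi>x t = - \<psi> (\<xi> t) t"
    unfolding left_integral_def right_integral_def by (simp_all add: integral_dx support)
qed

lemma integral_piecewise_at_curve:
  assumes t: "t \<in> {0..horizon}"
  shows "(LINT x|lborel. (if x < \<xi> t then pl else pr) * \<psi>t x t + (if x < \<xi> t then ql else qr) * \<psi>x x t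
            + (if x < \<xi> t then rl else rr) * \<psi> x t)
       = pl * left_integral \<psi>t t + pr * right_integral \<psi>t t + ql * left_integral \<psi>x t
         + qr * right_integral \<psi>x t + rl * left_integral \<psi> t + rr * right_integral \<psi> t"
proof -
  define F where "F p q r x = p * \<psi>t x t + q * \<psi>x x t + r * \<psi> x t" for p q r x
  have slices: "continuous_on UNIV (\<lambda>x. G x t)" if "continuous_on UNIV (\<lambda>(x, t). G x t)" for G
    by (intro continuous_on_compose_pair[OF that] continuous_intros)
  have integrable: "(\<lambda>y. G (\<xi> t + y) t) integrable_on {a..b}"
    if "continuous_on UNIV (\<lambda>(x, t). G x t)" for G :: "real \<Rightarrow> real \<Rightarrow> real" and a b
    by (intro integrable_continuous_interval continuous_on_compose_pair[OF that] continuous_intros)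
  have cont_F: "continuous_on UNIV (F p q r)" for p q r
    unfolding F_def
    by (intro continuous_intros slices[OF continuous] slices[OF continuous_dx] slices[OF continuous_dt])
  have support_F: "F p q r x = 0" if "R < \<bar>x\<bar>" for p q r x
    using that by (simp add: F_def support support_dx support_dt)
  have "(LINT x|lborel. (if x < \<xi> t then pl else pr) * \<psi>t x t + (if x < \<xi> t then ql else qr) * \<psi>x x t
            + (if x < \<xi> t then rl else rr) * \<psi> x t)
      = (LINT x|lborel. (if x < \<xi> t then F pl ql rl x else F pr qr rr x))"
    by (intro Bochner_Integration.integral_cong) (simp_all add: F_def)
  also have "\<dots> = integral {-halfwidth..0} (\<lambda>y. F pl ql rl (\<xi> t + y))
      + integral {0..halfwidth} (\<lambda>y. F pr qr rr (\<xi> t + y))"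
    using cont_F support_F halfwidth_bound[OF t] by (intro lborel_integral_split_at[where R=R]) auto
  also have "\<dots> = pl * left_integral \<psi>t t + pr * right_integral \<psi>t t + ql * left_integral \<psi>x t
         + qr * right_integral \<psi>x t + rl * left_integral \<psi> t + rr * right_integral \<psi> t"
    unfolding F_def left_integral_def right_integral_def
    by (simp add: integral_add integrable_add integrable_on_mult_right integrable[OF continuous]
        integrable[OF continuous_dx] integrable[OF continuous_dt])
  finally show ?thesis .
qed

text \<open>Weak form of \<open>\<partial>\<^sub>t p + \<partial>\<^sub>x q = r\<close> for fields that are constant in x on each side of
  the curve (values \<open>pl, ql, rl\<close> on the left, \<open>pr, qr, rr\<close> on the right) plus a mass \<open>\<omega>\<close>
  carried by the curve.\<close>

lemma piecewise_balance:
  fixes pl pr ql qr rl rr \<omega> :: "real \<Rightarrow> real"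
  assumes left: "\<And>t. (pl has_real_derivative rl t) (at t)"
    and right: "\<And>t. (pr has_real_derivative rr t) (at t)"
    and rankine_hugoniot: "\<And>t. (\<omega> has_real_derivative ql t - qr t - \<sigma> t * (pl t - pr t)) (at t)"
  shows "((\<lambda>t. pl t * left_integral \<psi>t t + pr t * right_integral \<psi>t t
              + ql t * left_integral \<psi>x t + qr t * right_integral \<psi>x t
              + rl t * left_integral \<psi> t + rr t * right_integral \<psi> t
              + \<omega> t * (\<psi>t (\<xi> t) t + \<sigma> t * \<psi>x (\<xi> t) t))
          has_integral - (pl 0 * left_integral \<psi> 0 + pr 0 * right_integral \<psi> 0 + \<omega> 0 * \<psi> (\<xi> 0) 0))
         {0..horizon}"
proof -
  define F where
    "F t = pl t * left_integral \<psi> t + pr t * right_integral \<psi> t + \<omega> t * \<psi> (\<xi> t) t" for t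
  have "(F has_real_derivative pl t * left_integral \<psi>t t + pr t * right_integral \<psi>t t
              + ql t * left_integral \<psi>x t + qr t * right_integral \<psi>x t
              + rl t * left_integral \<psi> t + rr t * right_integral \<psi> t
              + \<omega> t * (\<psi>t (\<xi> t) t + \<sigma> t * \<psi>x (\<xi> t) t)) (at t)"
    if t: "t \<in> {0..horizon}" for t
    unfolding F_def
    by (rule DERIV_cong, (rule DERIV_add DERIV_mult' left right rankine_hugoniot DERIV_side_integrals
        DERIV_on_curve)+) (simp add: side_integrals_dx[OF t] algebra_simps)
  then have "((\<lambda>t. pl t * left_integral \<psi>t t + pr t * right_integral \<psi>t t
              + ql t * left_integral \<psi>x t + qr t * right_integral \<psi>x t
              + rl t * left_integral \<psi> t + rr t * right_integral \<psi> t
              + \<omega> t * (\<psi>t (\<xi> t) t + \<sigma> t * \<psi>x (\<xi> t) t)) has_integral F horizon - F 0) {0..horizon}"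
    by (intro fundamental_theorem_of_calculus)
      (auto simp: horizon_def has_real_derivative_iff_has_vector_derivative
        intro: has_vector_derivative_at_within)
  moreover have "F horizon = 0"
    using R_less_horizon unfolding F_def left_integral_def right_integral_def by (simp add: support)
  ultimately show ?thesis by (simp add: F_def)
qed

lemma continuous_on_curve_trace:
  assumes "continuous_on UNIV (\<lambda>(x, t). G x t)"
  shows "continuous_on S (\<lambda>t. G (\<xi> t) t)"
  by (intro continuous_on_compose_pair[OF assms] continuous_on_subset[OF continuous_curve]
      continuous_on_id) auto

lemma set_integral_time_eq_integral:
  fixes h H :: "real \<Rightarrow> real"
  assumes "continuous_on {0..horizon} H"
    and "\<And>t. t \<in> {0..horizon} \<Longrightarrow> h t = H t" "\<And>t. R < t \<Longrightarrow> h t = 0"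
  shows "(LINT t:{0..}|lborel. h t) = integral {0..horizon} H"
  by (rule set_integral_atLeast_eq_integral) (use assms R_less_horizon in auto)

lemma mass_balance:
  fixes am ap :: real and ul ur \<omega> :: "real \<Rightarrow> real" and \<alpha> u :: "real \<Rightarrow> real \<Rightarrow> real"
  assumes \<alpha>: "\<alpha> = (\<lambda>x t. if x < \<xi> t then am else ap)"
    and u: "u = (\<lambda>x t. if x < \<xi> t then ul t else ur t)"
    and continuous_states: "continuous_on UNIV ul" "continuous_on UNIV ur"
    and rankine_hugoniot: "\<And>t. (\<omega> has_real_derivative am * (ul t - \<sigma> t) + ap * (\<sigma> t - ur t)) (at t)"
  shows "((LINT t:{0..}|lborel. LINT x|lborel. \<alpha> x t * \<psi>t x t) + (LINT t:{0..}|lborel. \<omega> t * \<psi>t (\<xi> t) t))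
       + ((LINT t:{0..}|lborel. LINT x|lborel. \<alpha> x t * u x t * \<psi>x x t)
          + (LINT t:{0..}|lborel. \<omega> t * \<sigma> t * \<psi>x (\<xi> t) t))
       = - (LINT x|lborel. \<alpha> x 0 * \<psi> x 0) - \<omega> 0 * \<psi> (\<xi> 0) 0"
proof -
  define A1 where "A1 t = am * left_integral \<psi>t t + ap * right_integral \<psi>t t" for t
  define A2 where "A2 t = \<omega> t * \<psi>t (\<xi> t) t" for t
  define A3 where "A3 t = am * ul t * left_integral \<psi>x t + ap * ur t * right_integral \<psi>x t" for t
  define A4 where "A4 t = \<omega> t * \<sigma> t * \<psi>x (\<xi> t) t" for t
  have continuous_weight: "continuous_on S \<omega>" for S
    using rankine_hugoniot by (meson DERIV_isCont continuous_at_imp_continuous_on)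
  have continuous: "continuous_on {0..horizon} A1" "continuous_on {0..horizon} A2"
    "continuous_on {0..horizon} A3" "continuous_on {0..horizon} A4"
    unfolding A1_def A2_def A3_def A4_def
    by (intro continuous_intros continuous_on_side_integrals continuous_dx continuous_dt
        continuous_on_curve_trace[OF continuous_dx] continuous_on_curve_trace[OF continuous_dt]
        continuous_weight continuous_on_subset[OF continuous_speed]
        continuous_on_subset[OF continuous_states(1)] continuous_on_subset[OF continuous_states(2)];
        simp)+
  have integrable: "A integrable_on {0..horizon}" if "continuous_on {0..horizon} A" for A :: "real \<Rightarrow> real"
    using that by (rule integrable_continuous_interval)
  have A1: "(LINT x|lborel. \<alpha> x t * \<psi>t x t) = A1 t" if "t \<in> {0..horizon}" for t
    using integral_piecewise_at_curve[OF that, of am ap 0 0 0 0] by (simp add: A1_def \<alpha>)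
  have 1: "(LINT t:{0..}|lborel. LINT x|lborel. \<alpha> x t * \<psi>t x t) = integral {0..horizon} A1"
    by (rule set_integral_time_eq_integral[OF continuous(1) A1]) (simp_all add: support_dt)
  have "(\<lambda>x. \<alpha> x t * u x t * \<psi>x x t) = (\<lambda>x. (if x < \<xi> t then am * ul t else ap * ur t) * \<psi>x x t)" for t
    by (auto simp: fun_eq_iff \<alpha> u)
  then have A3: "(LINT x|lborel. \<alpha> x t * u x t * \<psi>x x t) = A3 t" if "t \<in> {0..horizon}" for t
    using integral_piecewise_at_curve[OF that, of 0 0 "am * ul t" "ap * ur t" 0 0] by (simp add: A3_def)
  have 3: "(LINT t:{0..}|lborel. LINT x|lborel. \<alpha> x t * u x t * \<psi>x x t) = integral {0..horizon} A3"
    by (rule set_integral_time_eq_integral[OF continuous(3) A3]) (simp_all add: support_dx)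
  have 2: "(LINT t:{0..}|lborel. \<omega> t * \<psi>t (\<xi> t) t) = integral {0..horizon} A2"
    and 4: "(LINT t:{0..}|lborel. \<omega> t * \<sigma> t * \<psi>x (\<xi> t) t) = integral {0..horizon} A4"
    by (rule set_integral_time_eq_integral[OF continuous(2)], simp add: A2_def, simp add: support_dt,
        rule set_integral_time_eq_integral[OF continuous(4)], simp add: A4_def, simp add: support_dx)
  have "((\<lambda>t. A1 t + A2 t + A3 t + A4 t)
      has_integral - (am * left_integral \<psi> 0 + ap * right_integral \<psi> 0 + \<omega> 0 * \<psi> (\<xi> 0) 0)) {0..horizon}"
    using piecewise_balance[of "\<lambda>_. am" "\<lambda>_. 0" "\<lambda>_. ap" "\<lambda>_. 0" \<omega> "\<lambda>t. am * ul t" "\<lambda>t. ap * ur t"]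
      rankine_hugoniot
    by (simp add: A1_def A2_def A3_def A4_def algebra_simps)
  moreover have "(LINT x|lborel. \<alpha> x 0 * \<psi> x 0) = am * left_integral \<psi> 0 + ap * right_integral \<psi> 0"
    using integral_piecewise_at_curve[of 0 0 0 0 0 am ap] by (simp add: \<alpha> horizon_def)
  moreover have "integral {0..horizon} A1 + integral {0..horizon} A2
      + (integral {0..horizon} A3 + integral {0..horizon} A4)
      = integral {0..horizon} (\<lambda>t. A1 t + A2 t + A3 t + A4 t)"
    using continuous by (simp add: integral_add integrable integrable_add)
  ultimately show ?thesis
    unfolding 1 2 3 4 by (simp add: integral_unique)
qed

lemma momentum_balance:
  fixes S ul ur :: "real \<Rightarrow> real" and u :: "real \<Rightarrow> real \<Rightarrow> real"
  assumes u: "u = (\<lambda>x t. if x < \<xi> t then ul t else ur t)"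
    and continuous_source: "continuous_on UNIV S"
    and left: "\<And>t. (ul has_real_derivative S (ul t)) (at t)"
    and right: "\<And>t. (ur has_real_derivative S (ur t)) (at t)"
    and speed: "\<And>t. \<sigma> t = (ul t + ur t) / 2"
  shows "(LINT t:{0..}|lborel. LINT x|lborel. u x t * \<psi>t x t + (u x t)\<^sup>2 / 2 * \<psi>x x t + S (u x t) * \<psi> x t)
       = - (LINT x|lborel. u x 0 * \<psi> x 0)"
proof -
  define A where "A t = ul t * left_integral \<psi>t t + ur t * right_integral \<psi>t t
      + (ul t)\<^sup>2 / 2 * left_integral \<psi>x t + (ur t)\<^sup>2 / 2 * right_integral \<psi>x t
      + S (ul t) * left_integral \<psi> t + S (ur t) * right_integral \<psi> t" for t
  have continuous_state: "continuous_on T ul" "continuous_on T ur" for T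
    using left right by (meson DERIV_isCont continuous_at_imp_continuous_on)+
  have "continuous_on {0..horizon} A"
    unfolding A_def
    by (intro continuous_intros continuous_on_side_integrals continuous continuous_dx continuous_dt
        continuous_state continuous_on_compose2[OF continuous_source continuous_state(1)]
        continuous_on_compose2[OF continuous_source continuous_state(2)]; simp)
  moreover have "(\<lambda>x. u x t * \<psi>t x t + (u x t)\<^sup>2 / 2 * \<psi>x x t + S (u x t) * \<psi> x t)
      = (\<lambda>x. (if x < \<xi> t then ul t else ur t) * \<psi>t x t
         + (if x < \<xi> t then (ul t)\<^sup>2 / 2 else (ur t)\<^sup>2 / 2) * \<psi>x x t
         + (if x < \<xi> t then S (ul t) else S (ur t)) * \<psi> x t)" for t
    by (auto simp: fun_eq_iff u)
  then have "(LINT x|lborel. u x t * \<psi>t x t + (u x t)\<^sup>2 / 2 * \<psi>x x t + S (u x t) * \<psi> x t) = A t"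
    if "t \<in> {0..horizon}" for t
    using integral_piecewise_at_curve[OF that] by (simp add: A_def)
  ultimately have "(LINT t:{0..}|lborel. LINT x|lborel. u x t * \<psi>t x t + (u x t)\<^sup>2 / 2 * \<psi>x x t
      + S (u x t) * \<psi> x t) = integral {0..horizon} A"
    by (rule set_integral_time_eq_integral) (simp_all add: support support_dx support_dt)
  also have "\<dots> = - (ul 0 * left_integral \<psi> 0 + ur 0 * right_integral \<psi> 0)"
  proof -
    have "((\<lambda>_. 0) has_real_derivative (ul t)\<^sup>2 / 2 - (ur t)\<^sup>2 / 2 - \<sigma> t * (ul t - ur t)) (at t)" for t
      by (rule DERIV_cong[OF DERIV_const]) (simp add: speed power2_eq_square field_simps)
    from piecewise_balance[OF left right this] show ?thesis
      by (simp add: A_def[abs_def] integral_unique)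
  qed
  also have "ul 0 * left_integral \<psi> 0 + ur 0 * right_integral \<psi> 0 = (LINT x|lborel. u x 0 * \<psi> x 0)"
    using integral_piecewise_at_curve[of 0 0 0 0 0 "ul 0" "ur 0"] by (simp add: u horizon_def)
  finally show ?thesis .
qed

end

theorem weak_solution_delta_shock:
  fixes \<mu> ua am ap :: real and \<xi> \<sigma> \<omega> ul ur \<alpha>0 u0 :: "real \<Rightarrow> real"
    and \<alpha>s us :: "real \<Rightarrow> real \<Rightarrow> real"
  assumes curve: "\<And>t. (\<xi> has_real_derivative \<sigma> t) (at t)"
    and left: "\<And>t. (ul has_real_derivative \<mu> * (ua - ul t)) (at t)"
    and right: "\<And>t. (ur has_real_derivative \<mu> * (ua - ur t)) (at t)"
    and speed: "\<And>t. \<sigma> t = (ul t + ur t) / 2"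
    and rankine_hugoniot: "\<And>t. (\<omega> has_real_derivative am * (ul t - \<sigma> t) + ap * (\<sigma> t - ur t)) (at t)"
    and \<alpha>: "\<alpha>s = (\<lambda>x t. if x < \<xi> t then am else ap)"
    and u: "us = (\<lambda>x t. if x < \<xi> t then ul t else ur t)"
    and initial: "\<alpha>0 = (\<lambda>x. \<alpha>s x 0)" "u0 = (\<lambda>x. us x 0)" "\<omega> 0 = 0"
  shows "weak_solution \<mu> ua \<alpha>s us \<omega> \<xi> \<alpha>0 u0 0"
proof -
  have continuous_states: "continuous_on UNIV ul" "continuous_on UNIV ur"
    using left right by (meson DERIV_isCont continuous_at_imp_continuous_on)+
  have "\<sigma> = (\<lambda>t. (ul t + ur t) / 2)"
    using speed by auto
  then have continuous_speed: "continuous_on UNIV \<sigma>"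
    using continuous_states by (auto intro!: continuous_intros)
  have deriv_curve: "deriv \<xi> t = \<sigma> t" for t
    using curve by (rule DERIV_imp_deriv)
  show ?thesis
    unfolding weak_solution_def
  proof (intro allI impI conjI)
    fix \<psi> assume "test_fun \<psi>"
    then obtain R where "C1_test_function \<psi> (dx \<psi>) (dt \<psi>) R"
      by (rule test_fun_imp_C1_test_function)
    then interpret C1_test_function_on_curve \<psi> "dx \<psi>" "dt \<psi>" R \<xi> \<sigma>
      using curve continuous_speed by (simp add: C1_test_function_on_curve_def C1_test_function_on_curve_axioms_def)
    show "((LINT t:{0..}|lborel. LINT x|lborel. \<alpha>s x t * dt \<psi> x t)
          + (LINT t:{0..}|lborel. \<omega> t * dt \<psi> (\<xi> t) t))
       + ((LINT t:{0..}|lborel. LINT x|lborel. \<alpha>s x t * us x t * dx \<psi> x t)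
          + (LINT t:{0..}|lborel. \<omega> t * deriv \<xi> t * dx \<psi> (\<xi> t) t))
       = - (LINT x|lborel. \<alpha>0 x * \<psi> x 0) - 0 * \<psi> (\<xi> 0) 0"
      using mass_balance[OF \<alpha> u continuous_states rankine_hugoniot] initial
      by (simp add: deriv_curve)
    show "(LINT t:{0..}|lborel. LINT x|lborel.
            us x t * dt \<psi> x t + (us x t)\<^sup>2 / 2 * dx \<psi> x t + \<mu> * (ua - us x t) * \<psi> x t)
       = - (LINT x|lborel. u0 x * \<psi> x 0)"
      using momentum_balance[where S="\<lambda>v. \<mu> * (ua - v)", OF u _ left right speed] initial
      by (simp add: continuous_on_const continuous_on_diff continuous_on_mult continuous_on_id)
  qed
qed

theorem mainTheorem7:
  fixes \<mu> ua am ap um up :: real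
    and ul ur \<sigma> \<xi> \<omega> :: "real \<Rightarrow> real"
    and \<alpha>0 u0 :: "real \<Rightarrow> real"
    and \<alpha>s us :: "real \<Rightarrow> real \<Rightarrow> real"
  assumes "\<mu> > 0" and "am \<ge> 0" and "ap \<ge> 0" and "um > up"
    and "\<alpha>0 = (\<lambda>x. if x < 0 then am else ap)"
    and "u0 = (\<lambda>x. if x < 0 then um else up)"
    and "ul = (\<lambda>t. ua + (um - ua) * exp (- \<mu> * t))"
    and "ur = (\<lambda>t. ua + (up - ua) * exp (- \<mu> * t))"
    and "\<sigma> = (\<lambda>t. ua + ((um + up) / 2 - ua) * exp (- \<mu> * t))"
    and "\<xi> = (\<lambda>t. ua * t + (um + up - 2 * ua) / (2 * \<mu>) * (1 - exp (- \<mu> * t)))"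
    and "\<omega> = (\<lambda>t. (ap + am) * (um - up) / (2 * \<mu>) * (1 - exp (- \<mu> * t)))"
    and "\<alpha>s = (\<lambda>x t. if x < \<xi> t then am else ap)"
    and "us = (\<lambda>x t. if x < \<xi> t then ul t else ur t)"
  shows "weak_solution \<mu> ua \<alpha>s us \<omega> \<xi> \<alpha>0 u0 0
         \<and> (\<forall>t\<ge>0. ur t < \<sigma> t \<and> \<sigma> t < ul t)"
proof
  show "weak_solution \<mu> ua \<alpha>s us \<omega> \<xi> \<alpha>0 u0 0"
  proof (rule weak_solution_delta_shock[where \<sigma>=\<sigma> and ul=ul and ur=ur and am=am and ap=ap])
    show "(\<xi> has_real_derivative \<sigma> t) (at t)"
      "(ul has_real_derivative \<mu> * (ua - ul t)) (at t)"
      "(ur has_real_derivative \<mu> * (ua - ur t)) (at t)"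
      "(\<omega> has_real_derivative am * (ul t - \<sigma> t) + ap * (\<sigma> t - ur t)) (at t)" for t
      using assms(1) unfolding assms(7-11) by (auto intro!: derivative_eq_intros simp: field_simps)
  qed (use assms(5-13) in \<open>auto simp: field_simps\<close>)
  have "up * exp (- \<mu> * t) < um * exp (- \<mu> * t)" for t
    using assms(4) by simp
  then show "\<forall>t\<ge>0. ur t < \<sigma> t \<and> \<sigma> t < ul t"
    unfolding assms(7-9) by (simp add: field_simps)
qed

end
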